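(* Let $X=(X_1,\dots,X_d)$ be a non-degenerate $d$-dimensional $1$-Meixner random vector with $E[X_k]=0$ and $E[X_iX_j]=\delta_{i,j}$ for all $i,j,k$, with $[U_i,X_j]=\sum_k\alpha_{i,j,k}X_k+\beta_{i,j}I$, and let $F(\mathbf t):=\sum_{i,j,k}\alpha_{i,j,k}t_it_jt_k$. Then for all $\mathbf t\in\mathbb R^d$, $F(\mathbf t)=\tfrac12E\big[(\mathbf t\cdot X)^3\big]$.
   Context: Let $X_1,\dots,X_d$ be real random variables on $(\Omega,\mathcal F,P)$ with finite moments of all orders. $F$ (as a space) is the space of polynomial random variables $f(X_1,\dots,X_d)$ (complex coefficients), $F_n$ those of degree $\le n$, $G_0=F_0$, $G_n=F_n\ominus F_{n-1}$ in $L^2(P)$. For $f\in G_n$, $X_if\in G_{n-1}\oplus G_n\oplus G_{n+1}$; its components define $a^-(i)f,a^0(i)f,a^+(i)f$ respectively, extended linearly. $U_i:=a^-(i)+\tfrac12a^0(i)$. $(X_1,\dots,X_d)$ is a $d$-dimensional $1$-Meixner random vector if there are reals $\alpha_{i,j,k},\beta_{i,j}$ with $[U_i,X_j]=\sum_k\alpha_{i,j,k}X_k+\beta_{i,j}I$ for all $i,j$ (with $X_j$ the multiplication operator, $I$ the identity); it is non-degenerate if $I,X_1,\dots,X_d$ are linearly independent operators. $\mathbf t\cdot X=\sum_it_iX_i$. *)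

theory Defs
  imports "HOL-Probability.Probability"
begin

text \<open>Random variables X :: 'd \<Rightarrow> 'a \<Rightarrow> real on a probability space M, indexed by a
finite type 'd (so d = CARD('d)). L2 notions are expressed through integrals; operator
identities are required almost everywhere (elements of L2 are a.e.-classes).\<close>

definition monomial_rv :: "('d::finite \<Rightarrow> 'a \<Rightarrow> real) \<Rightarrow> ('d \<Rightarrow> nat) \<Rightarrow> 'a \<Rightarrow> complex" where
  "monomial_rv X m = (\<lambda>\<omega>. complex_of_real (\<Prod>i\<in>UNIV. X i \<omega> ^ m i))"

definition poly_rv_deg :: "('d::finite \<Rightarrow> 'a \<Rightarrow> real) \<Rightarrow> nat \<Rightarrow> ('a \<Rightarrow> complex) set" where
  "poly_rv_deg X n = {f. \<exists>c :: ('d \<Rightarrow> nat) \<Rightarrow> complex.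
      f = (\<lambda>\<omega>. \<Sum>m\<in>{m. sum m UNIV \<le> n}. c m * monomial_rv X m \<omega>)}"

definition poly_rv :: "('d::finite \<Rightarrow> 'a \<Rightarrow> real) \<Rightarrow> ('a \<Rightarrow> complex) set" where
  "poly_rv X = (\<Union>n. poly_rv_deg X n)"

definition poly_rv_degree :: "('d::finite \<Rightarrow> 'a \<Rightarrow> real) \<Rightarrow> ('a \<Rightarrow> complex) \<Rightarrow> nat" where
  "poly_rv_degree X f = (LEAST n. f \<in> poly_rv_deg X n)"

definition L2_inner :: "'a measure \<Rightarrow> ('a \<Rightarrow> complex) \<Rightarrow> ('a \<Rightarrow> complex) \<Rightarrow> complex" where
  "L2_inner M f g = integral\<^sup>L M (\<lambda>\<omega>. f \<omega> * cnj (g \<omega>))"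

definition L2_proj :: "'a measure \<Rightarrow> ('a \<Rightarrow> complex) set \<Rightarrow> ('a \<Rightarrow> complex) \<Rightarrow> 'a \<Rightarrow> complex" where
  "L2_proj M S f = (SOME p. p \<in> S \<and> (\<forall>g\<in>S. L2_inner M (\<lambda>\<omega>. f \<omega> - p \<omega>) g = 0))"

text \<open>Component in G_n = F_n \<ominus> F_(n-1) (G_0 = F_0).\<close>
fun G_comp :: "'a measure \<Rightarrow> ('d::finite \<Rightarrow> 'a \<Rightarrow> real) \<Rightarrow> nat \<Rightarrow> ('a \<Rightarrow> complex) \<Rightarrow> 'a \<Rightarrow> complex" where
  "G_comp M X 0 f = L2_proj M (poly_rv_deg X 0) f"
| "G_comp M X (Suc n) f = (\<lambda>\<omega>. L2_proj M (poly_rv_deg X (Suc n)) f \<omega> - L2_proj M (poly_rv_deg X n) f \<omega>)"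

text \<open>a^-(i) and a^0(i), defined on G_n and extended linearly:
  for f_n \<in> G_n, a^-(i) f_n is the G_(n-1)-component and a^0(i) f_n the G_n-component of X_i f_n.\<close>
definition a_minus :: "'a measure \<Rightarrow> ('d::finite \<Rightarrow> 'a \<Rightarrow> real) \<Rightarrow> 'd \<Rightarrow> ('a \<Rightarrow> complex) \<Rightarrow> 'a \<Rightarrow> complex" where
  "a_minus M X i f = (\<lambda>\<omega>. \<Sum>n\<in>{1..poly_rv_degree X f}.
      G_comp M X (n - 1) (\<lambda>\<eta>. complex_of_real (X i \<eta>) * G_comp M X n f \<eta>) \<omega>)"

definition a_zero :: "'a measure \<Rightarrow> ('d::finite \<Rightarrow> 'a \<Rightarrow> real) \<Rightarrow> 'd \<Rightarrow> ('a \<Rightarrow> complex) \<Rightarrow> 'a \<Rightarrow> complex" where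
  "a_zero M X i f = (\<lambda>\<omega>. \<Sum>n\<in>{0..poly_rv_degree X f}.
      G_comp M X n (\<lambda>\<eta>. complex_of_real (X i \<eta>) * G_comp M X n f \<eta>) \<omega>)"

definition U_op :: "'a measure \<Rightarrow> ('d::finite \<Rightarrow> 'a \<Rightarrow> real) \<Rightarrow> 'd \<Rightarrow> ('a \<Rightarrow> complex) \<Rightarrow> 'a \<Rightarrow> complex" where
  "U_op M X i f = (\<lambda>\<omega>. a_minus M X i f \<omega> + 1/2 * a_zero M X i f \<omega>)"

definition finite_moments :: "'a measure \<Rightarrow> ('d \<Rightarrow> 'a \<Rightarrow> real) \<Rightarrow> bool" where
  "finite_moments M X \<longleftrightarrow> (\<forall>i. X i \<in> borel_measurable M \<and> (\<forall>n::nat. integrable M (\<lambda>\<omega>. \<bar>X i \<omega>\<bar> ^ n)))"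

definition one_Meixner_coeffs :: "'a measure \<Rightarrow> ('d::finite \<Rightarrow> 'a \<Rightarrow> real)
    \<Rightarrow> ('d \<Rightarrow> 'd \<Rightarrow> 'd \<Rightarrow> real) \<Rightarrow> ('d \<Rightarrow> 'd \<Rightarrow> real) \<Rightarrow> bool" where
  "one_Meixner_coeffs M X \<alpha> \<beta> \<longleftrightarrow> (\<forall>i j. \<forall>f\<in>poly_rv X. AE \<omega> in M.
      U_op M X i (\<lambda>\<eta>. complex_of_real (X j \<eta>) * f \<eta>) \<omega> - complex_of_real (X j \<omega>) * U_op M X i f \<omega>
      = (\<Sum>k\<in>UNIV. complex_of_real (\<alpha> i j k) * complex_of_real (X k \<omega>) * f \<omega>)
        + complex_of_real (\<beta> i j) * f \<omega>)"

definition one_Meixner :: "'a measure \<Rightarrow> ('d::finite \<Rightarrow> 'a \<Rightarrow> real) \<Rightarrow> bool" where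
  "one_Meixner M X \<longleftrightarrow> (\<exists>\<alpha> \<beta>. one_Meixner_coeffs M X \<alpha> \<beta>)"

definition non_degenerate :: "'a measure \<Rightarrow> ('d::finite \<Rightarrow> 'a \<Rightarrow> real) \<Rightarrow> bool" where
  "non_degenerate M X \<longleftrightarrow> (\<forall>(c0::complex) (c::'d \<Rightarrow> complex).
      (\<forall>f\<in>poly_rv X. AE \<omega> in M. c0 * f \<omega> + (\<Sum>k\<in>UNIV. c k * complex_of_real (X k \<omega>) * f \<omega>) = 0)
      \<longrightarrow> c0 = 0 \<and> (\<forall>k. c k = 0))"

end

theory Submission
  imports Defs
begin

text \<open>Apply the commutation relation \<open>[U\<^sub>i, X\<^sub>j] = \<Sum>\<^sub>k \<alpha>\<^sub>i\<^sub>j\<^sub>k X\<^sub>k + \<beta>\<^sub>i\<^sub>j\<close> to the constant \<open>1\<close>.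
Since \<open>U\<^sub>i 1 = 0\<close>, it says that \<open>U\<^sub>i X\<^sub>j = \<Sum>\<^sub>k \<alpha>\<^sub>i\<^sub>j\<^sub>k X\<^sub>k + \<beta>\<^sub>i\<^sub>j\<close>.
The moment conditions make \<open>1, X\<^sub>1, \<dots>, X\<^sub>d\<close> orthonormal, so \<open>F\<^sub>0\<close> and \<open>F\<^sub>1\<close> are spanned
by orthonormal monomials and the projections onto them are explicit Fourier sums. Hence
\<open>X\<^sub>j \<in> G\<^sub>1\<close>, \<open>a\<^sup>-(i) X\<^sub>j = E[X\<^sub>i X\<^sub>j] = \<delta>\<^sub>i\<^sub>j\<close>, and \<open>a\<^sup>0(i) X\<^sub>j\<close>, the \<open>G\<^sub>1\<close>-component of
\<open>X\<^sub>i X\<^sub>j\<close>, is \<open>\<Sum>\<^sub>k E[X\<^sub>i X\<^sub>j X\<^sub>k] X\<^sub>k\<close>. Non-degeneracy allows comparing coefficients,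
which gives \<open>\<alpha>\<^sub>i\<^sub>j\<^sub>k = E[X\<^sub>i X\<^sub>j X\<^sub>k] / 2\<close>; the cubic form with these coefficients is
\<open>E[(t \<cdot> X)\<^sup>3] / 2\<close>.\<close>

lemma L2_inner_sum_left:
  assumes "\<And>k. k \<in> K \<Longrightarrow> integrable M (\<lambda>\<omega>. e k \<omega> * cnj (g \<omega>))"
  shows "L2_inner M (\<lambda>\<omega>. \<Sum>k\<in>K. c k * e k \<omega>) g = (\<Sum>k\<in>K. c k * L2_inner M (e k) g)"
  unfolding L2_inner_def sum_distrib_right
  using assms by (simp add: mult.assoc)

lemma L2_inner_sum_right:
  assumes "\<And>k. k \<in> K \<Longrightarrow> integrable M (\<lambda>\<omega>. f \<omega> * cnj (e k \<omega>))"
  shows "L2_inner M f (\<lambda>\<omega>. \<Sum>k\<in>K. c k * e k \<omega>) = (\<Sum>k\<in>K. cnj (c k) * L2_inner M f (e k))"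
proof -
  have "(\<lambda>\<omega>. f \<omega> * cnj (\<Sum>k\<in>K. c k * e k \<omega>)) = (\<lambda>\<omega>. \<Sum>k\<in>K. cnj (c k) * (f \<omega> * cnj (e k \<omega>)))"
    by (simp add: cnj_sum sum_distrib_left ac_simps)
  then show ?thesis
    unfolding L2_inner_def using assms by simp
qed

lemma L2_inner_diff_left:
  assumes "integrable M (\<lambda>\<omega>. f \<omega> * cnj (g \<omega>))" "integrable M (\<lambda>\<omega>. p \<omega> * cnj (g \<omega>))"
  shows "L2_inner M (\<lambda>\<omega>. f \<omega> - p \<omega>) g = L2_inner M f g - L2_inner M p g"
  unfolding L2_inner_def left_diff_distrib using assms by simp

lemma L2_proj_orthonormal_span:
  fixes e :: "'i \<Rightarrow> 'a \<Rightarrow> complex"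
  assumes "finite K"
    and e_int: "\<And>k l. k \<in> K \<Longrightarrow> l \<in> K \<Longrightarrow> integrable M (\<lambda>\<omega>. e k \<omega> * cnj (e l \<omega>))"
    and e_orth: "\<And>k l. k \<in> K \<Longrightarrow> l \<in> K \<Longrightarrow> L2_inner M (e k) (e l) = of_bool (k = l)"
    and h_int: "\<And>k. k \<in> K \<Longrightarrow> integrable M (\<lambda>\<omega>. h \<omega> * cnj (e k \<omega>))"
  shows "L2_proj M {f. \<exists>c. f = (\<lambda>\<omega>. \<Sum>k\<in>K. c k * e k \<omega>)} h
    = (\<lambda>\<omega>. \<Sum>k\<in>K. L2_inner M h (e k) * e k \<omega>)"
proof -
  let ?S = "{f. \<exists>c. f = (\<lambda>\<omega>. \<Sum>k\<in>K. c k * e k \<omega>)}"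
  have comb_int: "integrable M (\<lambda>\<omega>. (\<Sum>k\<in>K. c k * e k \<omega>) * cnj (e l \<omega>))" if "l \<in> K" for c l
    using e_int that by (simp add: sum_distrib_right mult.assoc)
  have residual: "L2_inner M (\<lambda>\<omega>. h \<omega> - (\<Sum>k\<in>K. c k * e k \<omega>)) (e l) = L2_inner M h (e l) - c l"
    if "l \<in> K" for c l
  proof -
    have "L2_inner M (\<lambda>\<omega>. \<Sum>k\<in>K. c k * e k \<omega>) (e l) = (\<Sum>k\<in>K. c k * of_bool (k = l))"
      using that by (simp add: L2_inner_sum_left e_int e_orth)
    also have "\<dots> = c l"
      using that \<open>finite K\<close> by simp
    finally show ?thesis
      using that by (simp add: L2_inner_diff_left h_int comb_int)
  qed
  show ?thesis
    unfolding L2_proj_def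
  proof (rule some_equality)
    show "(\<lambda>\<omega>. \<Sum>k\<in>K. L2_inner M h (e k) * e k \<omega>) \<in> ?S \<and>
      (\<forall>g\<in>?S. L2_inner M (\<lambda>\<omega>. h \<omega> - (\<Sum>k\<in>K. L2_inner M h (e k) * e k \<omega>)) g = 0)"
      using residual h_int comb_int
      by (auto simp: L2_inner_sum_right left_diff_distrib)
  next
    fix p assume p: "p \<in> ?S \<and> (\<forall>g\<in>?S. L2_inner M (\<lambda>\<omega>. h \<omega> - p \<omega>) g = 0)"
    then obtain c where c: "p = (\<lambda>\<omega>. \<Sum>k\<in>K. c k * e k \<omega>)" by blast
    have "e l \<in> ?S" if "l \<in> K" for l
      using that \<open>finite K\<close>
      by (intro CollectI exI[of _ "\<lambda>k. of_bool (k = l)"]) simp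
    with p have "L2_inner M (\<lambda>\<omega>. h \<omega> - p \<omega>) (e l) = 0" if "l \<in> K" for l
      using that by blast
    then have "c l = L2_inner M h (e l)" if "l \<in> K" for l
      using residual[of l c] that by (simp add: c)
    then show "p = (\<lambda>\<omega>. \<Sum>k\<in>K. L2_inner M h (e k) * e k \<omega>)"
      by (simp add: c)
  qed
qed

lemma abs_mult_le_sum_squares: "\<bar>(a::real) * b\<bar> \<le> \<bar>a\<bar> ^ 2 + \<bar>b\<bar> ^ 2"
proof -
  note sum_squares_bound[of "\<bar>a\<bar>" "\<bar>b\<bar>"]
  moreover have "0 \<le> \<bar>a\<bar> * \<bar>b\<bar>" by simp
  ultimately show ?thesis
    unfolding abs_mult by linarith
qed

lemma abs_mult3_le_sum_cubes: "\<bar>(a::real) * b * c\<bar> \<le> \<bar>a\<bar> ^ 3 + \<bar>b\<bar> ^ 3 + \<bar>c\<bar> ^ 3"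
proof -
  define m where "m = max \<bar>a\<bar> (max \<bar>b\<bar> \<bar>c\<bar>)"
  have "\<bar>a * b * c\<bar> \<le> m * m * m"
    unfolding abs_mult by (intro mult_mono) (auto simp: m_def)
  also have "\<dots> \<le> \<bar>a\<bar> ^ 3 + \<bar>b\<bar> ^ 3 + \<bar>c\<bar> ^ 3"
    by (auto simp: m_def max_def power3_eq_cube)
  finally show ?thesis .
qed

lemma cube_sum:
  fixes a :: "'i \<Rightarrow> 'b::comm_semiring_1"
  shows "(\<Sum>i\<in>I. a i) ^ 3 = (\<Sum>i\<in>I. \<Sum>j\<in>I. \<Sum>k\<in>I. a i * a j * a k)"
proof -
  have "(\<Sum>i\<in>I. a i) ^ 3 = (\<Sum>i\<in>I. \<Sum>j\<in>I. a i * a j) * (\<Sum>k\<in>I. a k)"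
    by (simp add: power3_eq_cube sum_product)
  also have "\<dots> = (\<Sum>i\<in>I. \<Sum>j\<in>I. \<Sum>k\<in>I. a i * a j * a k)"
    unfolding sum_distrib_right by (simp only: sum_distrib_left)
  finally show ?thesis .
qed

lemma monomial_rv_0: "monomial_rv X (\<lambda>_. 0) = (\<lambda>_. 1)"
  by (simp add: monomial_rv_def)

lemma monomial_rv_indicator: "monomial_rv X (indicator {k}) = (\<lambda>\<omega>. complex_of_real (X k \<omega>))"
proof -
  have "(\<Prod>i\<in>UNIV. X i \<omega> ^ indicator {k} i) = (\<Prod>i\<in>UNIV. if i = k then X k \<omega> else 1)" for \<omega>
    by (rule prod.cong) (auto simp: indicator_def)
  then show ?thesis
    by (simp add: monomial_rv_def)
qed

lemma exponents_deg_0: "{m :: 'd::finite \<Rightarrow> nat. sum m UNIV \<le> 0} = {\<lambda>_. 0}"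
  by (auto simp: fun_eq_iff)

lemma exponents_deg_1:
  "{m :: 'd::finite \<Rightarrow> nat. sum m UNIV \<le> 1} = insert (\<lambda>_. 0) (range (\<lambda>k. indicator {k}))"
proof (intro set_eqI iffI)
  fix m :: "'d \<Rightarrow> nat"
  assume "m \<in> {m. sum m UNIV \<le> 1}"
  then have deg: "sum m UNIV \<le> 1" by simp
  show "m \<in> insert (\<lambda>_. 0) (range (\<lambda>k. indicator {k}))"
  proof (cases "m = (\<lambda>_. 0)")
    case False
    then obtain k where "m k \<noteq> 0" by (auto simp: fun_eq_iff)
    moreover have "sum m UNIV = m k + sum m (UNIV - {k})"
      by (simp add: sum.remove)
    ultimately have "m k = 1" "sum m (UNIV - {k}) = 0"
      using deg by linarith+
    then have "m = indicator {k}"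
      by (auto simp: fun_eq_iff indicator_def)
    then show ?thesis by blast
  qed simp
qed (auto simp: indicator_def)

lemma inj_indicator_singleton: "inj (\<lambda>k. indicator {k} :: 'd \<Rightarrow> nat)"
proof (rule injI)
  fix k l :: 'd
  assume "indicator {k} = (indicator {l} :: 'd \<Rightarrow> nat)"
  then have "indicator {l} k = (1 :: nat)"
    by (metis indicator_simps(1) singletonI)
  then show "k = l"
    by (metis indicator_simps(2) singletonD zero_neq_one)
qed

lemma indicator_singleton_neq_zero: "indicator {k} \<noteq> (\<lambda>_. 0 :: nat)"
  by (metis indicator_simps(1) singletonI zero_neq_one)

lemma sum_exponents_deg_1:
  fixes g :: "('d::finite \<Rightarrow> nat) \<Rightarrow> 'b::comm_monoid_add"
  shows "(\<Sum>m\<in>{m. sum m UNIV \<le> 1}. g m) = g (\<lambda>_. 0) + (\<Sum>k\<in>UNIV. g (indicator {k}))"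
  unfolding exponents_deg_1
  by (subst sum.insert)
    (auto simp: sum.reindex[OF inj_indicator_singleton] indicator_singleton_neq_zero[symmetric])

lemma monomial_deg_1_cases:
  assumes "m \<in> {m. sum m UNIV \<le> 1}"
  obtains "m = (\<lambda>_. 0)" "monomial_rv X m = (\<lambda>_. 1)"
  | k where "m = indicator {k}" "monomial_rv X m = (\<lambda>\<omega>. complex_of_real (X k \<omega>))"
  using assms unfolding exponents_deg_1 by (auto simp: monomial_rv_0 monomial_rv_indicator)

lemma poly_rv_deg_0_iff: "f \<in> poly_rv_deg X 0 \<longleftrightarrow> (\<exists>c. f = (\<lambda>_. c))"
  unfolding poly_rv_deg_def exponents_deg_0 by (auto simp: monomial_rv_0)

lemma var_in_poly_rv_deg_1: "(\<lambda>\<omega>. complex_of_real (X j \<omega>)) \<in> poly_rv_deg X 1"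
  unfolding poly_rv_deg_def sum_exponents_deg_1
  by (intro CollectI exI[of _ "\<lambda>m. of_bool (m = indicator {j})"])
     (simp add: monomial_rv_indicator inj_eq[OF inj_indicator_singleton]
       indicator_singleton_neq_zero[symmetric])

lemma poly_rv_degree_const: "poly_rv_degree X (\<lambda>_. c) = 0"
  unfolding poly_rv_degree_def by (rule Least_eq_0) (auto simp: poly_rv_deg_0_iff)

lemma non_degenerate_affine_AE_eq_0:
  assumes "non_degenerate M X"
    and "AE \<omega> in M. c0 + (\<Sum>k\<in>UNIV. c k * complex_of_real (X k \<omega>)) = 0"
  shows "c0 = 0 \<and> (\<forall>k. c k = 0)"
proof -
  have "AE \<omega> in M. c0 * f \<omega> + (\<Sum>k\<in>UNIV. c k * complex_of_real (X k \<omega>) * f \<omega>) = 0" for f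
    using assms(2)
  proof eventually_elim
    case (elim \<omega>)
    then have "(c0 + (\<Sum>k\<in>UNIV. c k * complex_of_real (X k \<omega>))) * f \<omega> = 0" by simp
    then show ?case by (simp add: distrib_right sum_distrib_right)
  qed
  then show ?thesis
    using assms(1) unfolding non_degenerate_def by blast
qed

context prob_space
begin

lemma L2_proj_poly_rv_deg_0:
  assumes "integrable M h"
  shows "L2_proj M (poly_rv_deg X 0) h = (\<lambda>_. expectation h)"
  unfolding poly_rv_deg_def exponents_deg_0
  using L2_proj_orthonormal_span[of "{\<lambda>_. 0}" M "monomial_rv X" h] assms
  by (simp add: monomial_rv_0 L2_inner_def prob_space)

end

locale orthonormal_rv = prob_space M for M :: "'a measure" +
  fixes X :: "'d::finite \<Rightarrow> 'a \<Rightarrow> real"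
  assumes finite_moments: "finite_moments M X"
    and mean_zero: "\<And>k. expectation (X k) = 0"
    and covariance: "\<And>i j. expectation (\<lambda>\<omega>. X i \<omega> * X j \<omega>) = (if i = j then 1 else 0)"
begin

lemma borel_measurable_X [measurable]: "X k \<in> borel_measurable M"
  using finite_moments unfolding finite_moments_def by blast

lemma integrable_abs_power_X: "integrable M (\<lambda>\<omega>. \<bar>X k \<omega>\<bar> ^ n)"
  using finite_moments unfolding finite_moments_def by blast

lemma integrable_X: "integrable M (X k)"
  using integrable_abs_power_X[of k 1] by (rule Bochner_Integration.integrable_bound) auto

lemma integrable_X2: "integrable M (\<lambda>\<omega>. X i \<omega> * X j \<omega>)"
proof (rule Bochner_Integration.integrable_bound)
  show "integrable M (\<lambda>\<omega>. \<bar>X i \<omega>\<bar> ^ 2 + \<bar>X j \<omega>\<bar> ^ 2)"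
    using integrable_abs_power_X by (intro Bochner_Integration.integrable_add)
qed (use abs_mult_le_sum_squares in auto)

lemma integrable_X3: "integrable M (\<lambda>\<omega>. X i \<omega> * X j \<omega> * X k \<omega>)"
proof (rule Bochner_Integration.integrable_bound)
  show "integrable M (\<lambda>\<omega>. \<bar>X i \<omega>\<bar> ^ 3 + \<bar>X j \<omega>\<bar> ^ 3 + \<bar>X k \<omega>\<bar> ^ 3)"
    using integrable_abs_power_X by (intro Bochner_Integration.integrable_add)
qed (use abs_mult3_le_sum_cubes in auto)

lemma complex_integrable_X:
  "integrable M (\<lambda>\<omega>. complex_of_real (X i \<omega>))"
  "integrable M (\<lambda>\<omega>. complex_of_real (X i \<omega>) * complex_of_real (X j \<omega>))"
  "integrable M (\<lambda>\<omega>. complex_of_real (X i \<omega>) * complex_of_real (X j \<omega>) * complex_of_real (X k \<omega>))"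
  using integrable_of_real[OF integrable_X] integrable_of_real[OF integrable_X2]
    integrable_of_real[OF integrable_X3] by simp_all

lemma complex_expectation_X:
  "expectation (\<lambda>\<omega>. complex_of_real (X i \<omega>)) = 0"
  "expectation (\<lambda>\<omega>. complex_of_real (X i \<omega>) * complex_of_real (X j \<omega>)) = of_bool (i = j)"
  "expectation (\<lambda>\<omega>. complex_of_real (X i \<omega>) * complex_of_real (X j \<omega>) * complex_of_real (X k \<omega>))
    = complex_of_real (expectation (\<lambda>\<omega>. X i \<omega> * X j \<omega> * X k \<omega>))"
  using integral_complex_of_real[of M "\<lambda>\<omega>. X i \<omega> * X j \<omega>"]
    integral_complex_of_real[of M "\<lambda>\<omega>. X i \<omega> * X j \<omega> * X k \<omega>"]
  by (simp_all add: mean_zero covariance)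

lemma integrable_monomials_deg_1:
  assumes "m \<in> {m. sum m UNIV \<le> 1}" "m' \<in> {m. sum m UNIV \<le> 1}"
  shows "integrable M (\<lambda>\<omega>. monomial_rv X m \<omega> * cnj (monomial_rv X m' \<omega>))"
  using assms by (elim monomial_deg_1_cases[where X = X]) (simp_all add: complex_integrable_X)

lemma orthonormal_monomials_deg_1:
  assumes "m \<in> {m. sum m UNIV \<le> 1}" "m' \<in> {m. sum m UNIV \<le> 1}"
  shows "L2_inner M (monomial_rv X m) (monomial_rv X m') = of_bool (m = m')"
  using assms by (elim monomial_deg_1_cases[where X = X])
    (simp_all add: L2_inner_def complex_expectation_X mean_zero prob_space
      inj_eq[OF inj_indicator_singleton] indicator_singleton_neq_zero
      indicator_singleton_neq_zero[symmetric])

lemma L2_proj_poly_rv_deg_1: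
  assumes "integrable M h" "\<And>k. integrable M (\<lambda>\<omega>. h \<omega> * complex_of_real (X k \<omega>))"
  shows "L2_proj M (poly_rv_deg X 1) h = (\<lambda>\<omega>. expectation h
    + (\<Sum>k\<in>UNIV. expectation (\<lambda>\<eta>. h \<eta> * complex_of_real (X k \<eta>)) * complex_of_real (X k \<omega>)))"
proof -
  have "L2_proj M (poly_rv_deg X 1) h
    = (\<lambda>\<omega>. \<Sum>m\<in>{m. sum m UNIV \<le> 1}. L2_inner M h (monomial_rv X m) * monomial_rv X m \<omega>)"
    unfolding poly_rv_deg_def
  proof (rule L2_proj_orthonormal_span)
    show "finite {m :: 'd \<Rightarrow> nat. sum m UNIV \<le> 1}"
      unfolding exponents_deg_1 by simp
    show "integrable M (\<lambda>\<omega>. h \<omega> * cnj (monomial_rv X m \<omega>))" if "m \<in> {m. sum m UNIV \<le> 1}" for m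
      using that by (elim monomial_deg_1_cases[where X = X]) (simp_all add: assms)
  qed (fact integrable_monomials_deg_1 orthonormal_monomials_deg_1)+
  then show ?thesis
    unfolding sum_exponents_deg_1
    by (simp add: monomial_rv_0 monomial_rv_indicator L2_inner_def)
qed

lemma var_notin_poly_rv_deg_0: "(\<lambda>\<omega>. complex_of_real (X j \<omega>)) \<notin> poly_rv_deg X 0"
proof
  assume "(\<lambda>\<omega>. complex_of_real (X j \<omega>)) \<in> poly_rv_deg X 0"
  then obtain c where "(\<lambda>\<omega>. complex_of_real (X j \<omega>)) = (\<lambda>_. c)"
    by (auto simp: poly_rv_deg_0_iff)
  then have X_const: "X j = (\<lambda>_. Re c)"
    by (metis Re_complex_of_real)
  then have "Re c = 0"
    using mean_zero[of j] by (simp add: prob_space)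
  then show False
    using covariance[of j j] X_const by simp
qed

lemma poly_rv_degree_var: "poly_rv_degree X (\<lambda>\<omega>. complex_of_real (X j \<omega>)) = 1"
  unfolding poly_rv_degree_def
proof (rule Least_equality)
  show "1 \<le> n" if "(\<lambda>\<omega>. complex_of_real (X j \<omega>)) \<in> poly_rv_deg X n" for n
    using that var_notin_poly_rv_deg_0 by (cases n) auto
qed (fact var_in_poly_rv_deg_1)

lemma G_comp_1:
  "G_comp M X 1 f = (\<lambda>\<omega>. L2_proj M (poly_rv_deg X 1) f \<omega> - L2_proj M (poly_rv_deg X 0) f \<omega>)"
  using G_comp.simps(2)[of M X 0 f] by simp

lemma G_comp_var:
  "G_comp M X 0 (\<lambda>\<omega>. complex_of_real (X j \<omega>)) = (\<lambda>_. 0)"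
  "G_comp M X 1 (\<lambda>\<omega>. complex_of_real (X j \<omega>)) = (\<lambda>\<omega>. complex_of_real (X j \<omega>))"
  by (simp_all add: G_comp_1 L2_proj_poly_rv_deg_0 L2_proj_poly_rv_deg_1 complex_integrable_X
      complex_expectation_X mean_zero del: One_nat_def)

lemma U_op_const_1: "U_op M X i (\<lambda>_. 1) = (\<lambda>_. 0)"
  by (simp add: U_op_def a_minus_def a_zero_def poly_rv_degree_const L2_proj_poly_rv_deg_0
      complex_integrable_X mean_zero prob_space)

lemma U_op_var: "U_op M X i (\<lambda>\<omega>. complex_of_real (X j \<omega>)) = (\<lambda>\<omega>. of_bool (i = j)
  + 1/2 * (\<Sum>k\<in>UNIV. complex_of_real (expectation (\<lambda>\<eta>. X i \<eta> * X j \<eta> * X k \<eta>)) * complex_of_real (X k \<omega>)))"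
proof -
  have a_minus: "a_minus M X i (\<lambda>\<omega>. complex_of_real (X j \<omega>)) = (\<lambda>_. of_bool (i = j))"
    by (simp add: a_minus_def poly_rv_degree_var G_comp_var L2_proj_poly_rv_deg_0
        complex_integrable_X complex_expectation_X del: One_nat_def)
  have "{0..1::nat} = {0, 1}"
    by auto
  then have a_zero: "a_zero M X i (\<lambda>\<omega>. complex_of_real (X j \<omega>)) = (\<lambda>\<omega>. \<Sum>k\<in>UNIV.
      complex_of_real (expectation (\<lambda>\<eta>. X i \<eta> * X j \<eta> * X k \<eta>)) * complex_of_real (X k \<omega>))"
    unfolding a_zero_def poly_rv_degree_var
    by (simp add: G_comp_var G_comp_1 L2_proj_poly_rv_deg_0 L2_proj_poly_rv_deg_1
        complex_integrable_X complex_expectation_X mean_zero del: One_nat_def)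
  show ?thesis
    unfolding U_op_def a_minus a_zero by simp
qed

lemma one_Meixner_coeffs_eq_third_moment:
  assumes "one_Meixner_coeffs M X \<alpha> \<beta>" and "non_degenerate M X"
  shows "\<alpha> i j k = expectation (\<lambda>\<omega>. X i \<omega> * X j \<omega> * X k \<omega>) / 2"
proof -
  define m where "m k = expectation (\<lambda>\<omega>. X i \<omega> * X j \<omega> * X k \<omega>)" for k
  have "(\<lambda>_. 1) \<in> poly_rv X"
    unfolding poly_rv_def using poly_rv_deg_0_iff by blast
  then have "AE \<omega> in M. U_op M X i (\<lambda>\<omega>. complex_of_real (X j \<omega>)) \<omega>
        - complex_of_real (X j \<omega>) * U_op M X i (\<lambda>_. 1) \<omega>
      = (\<Sum>k\<in>UNIV. complex_of_real (\<alpha> i j k) * complex_of_real (X k \<omega>)) + complex_of_real (\<beta> i j)"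
    using assms(1) unfolding one_Meixner_coeffs_def by fastforce
  then have "AE \<omega> in M. (of_bool (i = j) - complex_of_real (\<beta> i j))
      + (\<Sum>k\<in>UNIV. complex_of_real (m k / 2 - \<alpha> i j k) * complex_of_real (X k \<omega>)) = 0"
    by eventually_elim
      (simp add: U_op_var U_op_const_1 m_def algebra_simps sum_subtractf sum_distrib_left)
  from non_degenerate_affine_AE_eq_0[OF assms(2) this]
  have "complex_of_real (m k / 2 - \<alpha> i j k) = 0"
    by blast
  then show ?thesis
    unfolding of_real_eq_0_iff m_def by simp
qed

lemma expectation_linear_form_cube:
  "expectation (\<lambda>\<omega>. (\<Sum>i\<in>UNIV. t i * X i \<omega>) ^ 3)
    = (\<Sum>i\<in>UNIV. \<Sum>j\<in>UNIV. \<Sum>k\<in>UNIV. t i * t j * t k * expectation (\<lambda>\<omega>. X i \<omega> * X j \<omega> * X k \<omega>))"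
proof -
  have "(\<Sum>i\<in>UNIV. t i * X i \<omega>) ^ 3
    = (\<Sum>i\<in>UNIV. \<Sum>j\<in>UNIV. \<Sum>k\<in>UNIV. t i * t j * t k * (X i \<omega> * X j \<omega> * X k \<omega>))" for \<omega>
    unfolding cube_sum by (simp add: ac_simps)
  then show ?thesis
    by (simp add: integrable_X3)
qed

end

theorem mainTheorem10:
  fixes M :: "'a measure" and X :: "'d::finite \<Rightarrow> 'a \<Rightarrow> real"
    and \<alpha> :: "'d \<Rightarrow> 'd \<Rightarrow> 'd \<Rightarrow> real" and \<beta> :: "'d \<Rightarrow> 'd \<Rightarrow> real"
    and t :: "'d \<Rightarrow> real"
  assumes "prob_space M"
    and "finite_moments M X"
    and "one_Meixner_coeffs M X \<alpha> \<beta>"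
    and "non_degenerate M X"
    and "\<And>k. integral\<^sup>L M (X k) = 0"
    and "\<And>i j. integral\<^sup>L M (\<lambda>\<omega>. X i \<omega> * X j \<omega>) = (if i = j then 1 else 0)"
  shows "(\<Sum>i\<in>UNIV. \<Sum>j\<in>UNIV. \<Sum>k\<in>UNIV. \<alpha> i j k * t i * t j * t k)
         = 1/2 * integral\<^sup>L M (\<lambda>\<omega>. (\<Sum>i\<in>UNIV. t i * X i \<omega>) ^ 3)"
proof -
  interpret orthonormal_rv M X
    using assms(1,2,5,6) by (simp add: orthonormal_rv_def orthonormal_rv_axioms_def)
  show ?thesis
    by (simp add: expectation_linear_form_cube one_Meixner_coeffs_eq_third_moment[OF assms(3,4)]
        sum_distrib_left ac_simps)
qed

end
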